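(* Let $n\ge2$. The space $\mathrm{SL}(n,\mathbb R)/\mathrm{SL}(n,\mathbb Z)$ contains pairs of points which are not midpoint blockable. In particular, no point $m\in\mathrm{SL}(n,\mathbb R)/\mathrm{SL}(n,\mathbb Z)$ is midpoint blockable away from itself.
   Context: For a connected Lie group $G$ with Lie algebra $\mathfrak g$, lattice $\Gamma$, $M=G/\Gamma$: connecting curves for $m_1,m_2$ are $c(t)=\exp(tx)\cdot m_1$, $0\le t\le1$, $x\in\mathfrak g$, with $c(0)=m_1,c(1)=m_2$. The pair $m_1,m_2$ is midpoint blockable if $\{c(1/2): c \text{ a connecting curve}\}$ is finite; $m$ is midpoint blockable away from itself if the pair $m,m$ is midpoint blockable. *)

theory Defs
  imports "HOL-Analysis.Analysis"
begin

text \<open>Matrices are real n-by-n matrices, with n encoded by the finite index type 'n.\<close>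

primrec mpow :: "real^'n^'n \<Rightarrow> nat \<Rightarrow> real^'n^'n" where
  "mpow A 0 = mat 1"
| "mpow A (Suc k) = A ** mpow A k"

definition mexp :: "real^'n^'n \<Rightarrow> real^'n^'n" where
  "mexp A = (\<Sum>k. (1 / fact k) *\<^sub>R mpow A k)"

definition SLR :: "(real^'n^'n) set" where
  "SLR = {A. det A = 1}"

definition SLZ :: "(real^'n^'n) set" where
  "SLZ = {A \<in> SLR. \<forall>i j. A $ i $ j \<in> \<int>}"

definition slR :: "(real^'n^'n) set" where
  "slR = {X. trace X = 0}"

text \<open>Points of M = G / Gamma are the cosets g Gamma.\<close>
definition coset :: "real^'n^'n \<Rightarrow> (real^'n^'n) set" where
  "coset g = {g ** h | h. h \<in> SLZ}"

definition Mspace :: "(real^'n^'n) set set" where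
  "Mspace = coset ` SLR"

definition act :: "real^'n^'n \<Rightarrow> (real^'n^'n) set \<Rightarrow> (real^'n^'n) set" where
  "act g m = (\<lambda>h. g ** h) ` m"

definition connecting_curve ::
  "(real^'n^'n) set \<Rightarrow> (real^'n^'n) set \<Rightarrow> (real \<Rightarrow> (real^'n^'n) set) \<Rightarrow> bool" where
  "connecting_curve m1 m2 c \<longleftrightarrow>
     (\<exists>x \<in> slR. \<forall>t. c t = act (mexp (t *\<^sub>R x)) m1) \<and> c 0 = m1 \<and> c 1 = m2"

definition midpoint_blockable :: "(real^'n^'n) set \<Rightarrow> (real^'n^'n) set \<Rightarrow> bool" where
  "midpoint_blockable m1 m2 \<longleftrightarrow> finite {c (1/2) | c. connecting_curve m1 m2 c}"

definition midpoint_blockable_away_from_itself :: "(real^'n^'n) set \<Rightarrow> bool" where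
  "midpoint_blockable_away_from_itself m \<longleftrightarrow> midpoint_blockable m m"

end

theory Submission
  imports Defs
begin

text \<open>Fix a coordinate plane, let \<open>R(\<theta>) = exp(\<theta> J)\<close> be the rotation by \<open>\<theta>\<close> in it and
  \<open>D\<^sub>s = diag(s, 1/s)\<close>. For \<open>m = g\<Gamma>\<close> the traceless matrix \<open>X\<^sub>s = \<pi> g D\<^sub>s J D\<^sub>s\<^sup>-\<^sup>1 g\<^sup>-\<^sup>1\<close> gives the
  curve \<open>t \<mapsto> g D\<^sub>s R(t\<pi>) D\<^sub>s\<^sup>-\<^sup>1 \<Gamma>\<close>. At \<open>t = 1\<close> it returns to \<open>m\<close>, because \<open>D\<^sub>s R(\<pi>) D\<^sub>s\<^sup>-\<^sup>1\<close> is the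
  half-turn \<open>-1\<close> of the plane, an element of \<open>SL(n,\<int>)\<close>. The midpoints \<open>g D\<^sub>s R(\<pi>/2) D\<^sub>s\<^sup>-\<^sup>1 \<Gamma>\<close>
  for two values \<open>s, t > 0\<close> differ by \<open>diag(t\<^sup>2/s\<^sup>2, s\<^sup>2/t\<^sup>2)\<close>, which is integral only if \<open>s = t\<close>;
  so every point has infinitely many midpoints with itself.\<close>

definition plane_matrix :: "'n \<Rightarrow> 'n \<Rightarrow> real \<Rightarrow> real \<Rightarrow> real \<Rightarrow> real \<Rightarrow> real \<Rightarrow> real^'n^'n" where
  "plane_matrix i j a b c d e = (\<chi> k l.
     if k = i \<and> l = i then a else if k = i \<and> l = j then b else
     if k = j \<and> l = i then c else if k = j \<and> l = j then d else if k = l then e else 0)"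

lemma plane_matrix_mult:
  fixes i j :: "'n::finite"
  assumes "i \<noteq> j"
  shows "plane_matrix i j a b c d e ** plane_matrix i j a' b' c' d' e' =
         plane_matrix i j (a*a' + b*c') (a*b' + b*d') (c*a' + d*c') (c*b' + d*d') (e*e')"
proof -
  have split_sum: "sum f UNIV = f i + f j + sum f (UNIV - {i, j})" for f :: "'n \<Rightarrow> real"
  proof -
    have "(UNIV::'n set) = insert i (insert j (UNIV - {i, j}))" by auto
    then show ?thesis using assms by (metis add.assoc finite_Diff finite insert_iff sum.insert Diff_iff)
  qed
  have rest: "(\<Sum>l\<in>UNIV - {i, j}. plane_matrix i j a b c d e $ k $ l * plane_matrix i j a' b' c' d' e' $ l $ m)
      = (if k = m \<and> k \<notin> {i, j} then e * e' else 0)" for k m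
  proof -
    have "(\<Sum>l\<in>UNIV - {i, j}. plane_matrix i j a b c d e $ k $ l * plane_matrix i j a' b' c' d' e' $ l $ m)
        = (\<Sum>l\<in>UNIV - {i, j}. if l = k then (if k = m then e * e' else 0) else 0)"
      by (rule sum.cong) (auto simp: plane_matrix_def)
    then show ?thesis by simp
  qed
  show ?thesis
    using assms by (simp add: vec_eq_iff matrix_matrix_mult_def split_sum rest) (auto simp: plane_matrix_def)
qed

lemma mat_1_eq_plane_matrix: "i \<noteq> j \<Longrightarrow> (mat 1 :: real^'n^'n) = plane_matrix i j 1 0 0 1 1"
  by (auto simp: plane_matrix_def mat_def vec_eq_iff)

lemma plane_matrix_add:
  "i \<noteq> j \<Longrightarrow> plane_matrix i j a b c d e + plane_matrix i j a' b' c' d' e' =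
   plane_matrix i j (a + a') (b + b') (c + c') (d + d') (e + e')"
  unfolding plane_matrix_def vec_eq_iff by auto

lemma scaleR_plane_matrix:
  "i \<noteq> j \<Longrightarrow> r *\<^sub>R plane_matrix i j a b c d e = plane_matrix i j (r*a) (r*b) (r*c) (r*d) (r*e)"
  unfolding plane_matrix_def vec_eq_iff by auto

lemma sums_plane_matrix:
  fixes i j :: "'n::finite"
  assumes "i \<noteq> j" and "a sums A" "b sums B" "c sums C" "d sums D" "e sums E"
  shows "(\<lambda>k. plane_matrix i j (a k) (b k) (c k) (d k) (e k)) sums plane_matrix i j A B C D E"
proof -
  let ?E = "plane_matrix i j"
  have "(\<lambda>k. ?E (a k) (b k) (c k) (d k) (e k)) =
      (\<lambda>k. a k *\<^sub>R ?E 1 0 0 0 0 + b k *\<^sub>R ?E 0 1 0 0 0 + c k *\<^sub>R ?E 0 0 1 0 0 +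
           d k *\<^sub>R ?E 0 0 0 1 0 + e k *\<^sub>R ?E 0 0 0 0 1)"
       "?E A B C D E = A *\<^sub>R ?E 1 0 0 0 0 + B *\<^sub>R ?E 0 1 0 0 0 + C *\<^sub>R ?E 0 0 1 0 0 +
           D *\<^sub>R ?E 0 0 0 1 0 + E *\<^sub>R ?E 0 0 0 0 1"
    using assms(1) by (simp_all add: fun_eq_iff scaleR_plane_matrix plane_matrix_add)
  then show ?thesis
    by (simp only:) (intro sums_add sums_scaleR_left assms(2-))
qed

definition plane_rotation :: "'n \<Rightarrow> 'n \<Rightarrow> real \<Rightarrow> real^'n^'n" where
  "plane_rotation i j \<theta> = plane_matrix i j (cos \<theta>) (- sin \<theta>) (sin \<theta>) (cos \<theta>) 1"

definition plane_squeeze :: "'n \<Rightarrow> 'n \<Rightarrow> real \<Rightarrow> real^'n^'n" where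
  "plane_squeeze i j s = plane_matrix i j s 0 0 (1 / s) 1"

lemma mpow_plane_rotation_generator:
  fixes i j :: "'n::finite"
  assumes "i \<noteq> j"
  shows "mpow (plane_matrix i j 0 (-\<theta>) \<theta> 0 0) k =
     plane_matrix i j (fact k * cos_coeff k * \<theta>^k) (- (fact k * sin_coeff k * \<theta>^k))
       (fact k * sin_coeff k * \<theta>^k) (fact k * cos_coeff k * \<theta>^k) (if k = 0 then 1 else 0)"
proof (induction k)
  case 0
  then show ?case using assms by (simp add: mat_1_eq_plane_matrix cos_coeff_def sin_coeff_def)
next
  case (Suc k)
  have cos_step: "fact (Suc k) * cos_coeff (Suc k) * \<theta>^(Suc k) = - \<theta> * (fact k * sin_coeff k * \<theta>^k)"
    and sin_step: "fact (Suc k) * sin_coeff (Suc k) * \<theta>^(Suc k) = \<theta> * (fact k * cos_coeff k * \<theta>^k)"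
    by (simp_all add: cos_coeff_Suc sin_coeff_Suc field_simps)
  show ?case
    by (simp only: mpow.simps Suc.IH plane_matrix_mult[OF assms] cos_step sin_step) simp
qed

lemma exp_series_plane_rotation_generator:
  fixes i j :: "'n::finite"
  assumes "i \<noteq> j"
  shows "(\<lambda>k. (1 / fact k) *\<^sub>R mpow (plane_matrix i j 0 (-\<theta>) \<theta> 0 0) k) sums plane_rotation i j \<theta>"
proof -
  have "(\<lambda>k. plane_matrix i j (cos_coeff k * \<theta>^k) (- (sin_coeff k * \<theta>^k))
      (sin_coeff k * \<theta>^k) (cos_coeff k * \<theta>^k) (if k = 0 then 1 else 0))
      sums plane_matrix i j (cos \<theta>) (- sin \<theta>) (sin \<theta>) (cos \<theta>) 1"
    using cos_converges[of \<theta>] sin_converges[of \<theta>] sums_single[of 0 "\<lambda>_. 1::real"]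
    by (intro sums_plane_matrix[OF assms] sums_minus) simp_all
  moreover have "(if k = 0 then 1 else 0) / fact k = (if k = 0 then 1 else 0 :: real)" for k
    by simp
  ultimately show ?thesis
    by (simp add: mpow_plane_rotation_generator[OF assms] scaleR_plane_matrix[OF assms] plane_rotation_def)
qed

lemma mpow_conj:
  assumes "P ** Q = mat 1" "Q ** P = mat 1"
  shows "mpow (P ** Y ** Q) k = P ** mpow Y k ** Q"
proof (induction k)
  case 0
  then show ?case using assms(1) by simp
next
  case (Suc k)
  have "mpow (P ** Y ** Q) (Suc k) = P ** Y ** (Q ** P) ** mpow Y k ** Q"
    using Suc.IH by (simp add: matrix_mul_assoc)
  then show ?case using assms(2) by (simp add: matrix_mul_assoc)
qed

lemma matrix_add_rdistrib: "(B + C) ** A = B ** A + C ** A"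
  by (vector matrix_matrix_mult_def sum.distrib[symmetric] field_simps)

lemma matrix_mul_scaleR_right: "(A::real^'n^'m) ** (r *\<^sub>R B) = r *\<^sub>R (A ** B)"
  by (simp add: matrix_scalar_ac scalar_matrix_assoc)

lemma bounded_linear_matrix_conj: "bounded_linear (\<lambda>M::real^'n^'n. P ** M ** Q)"
proof -
  have "linear (\<lambda>M::real^'n^'n. P ** M ** Q)"
    by (rule linearI) (simp_all add: matrix_add_ldistrib matrix_add_rdistrib
        matrix_mul_scaleR_right scalar_matrix_assoc[symmetric])
  then show ?thesis by (simp add: linear_conv_bounded_linear)
qed

lemma mexp_conj:
  assumes "P ** Q = mat 1" "Q ** P = mat 1"
    and "(\<lambda>k. (1 / fact k) *\<^sub>R mpow Y k) sums S"
  shows "mexp (P ** Y ** Q) = P ** S ** Q"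
proof -
  have "(\<lambda>k. P ** ((1 / fact k) *\<^sub>R mpow Y k) ** Q) sums (P ** S ** Q)"
    by (rule bounded_linear.sums[OF bounded_linear_matrix_conj assms(3)])
  then have "(\<lambda>k. (1 / fact k) *\<^sub>R mpow (P ** Y ** Q) k) sums (P ** S ** Q)"
    by (simp add: mpow_conj[OF assms(1,2)] matrix_mul_scaleR_right scalar_matrix_assoc[symmetric])
  then show ?thesis
    unfolding mexp_def by (rule sums_unique[symmetric])
qed

lemma trace_conj:
  fixes P Q Y :: "real^'n^'n"
  assumes "Q ** P = mat 1"
  shows "trace (P ** Y ** Q) = trace Y"
  by (metis assms matrix_mul_assoc matrix_mul_lid trace_mul_sym)

lemma trace_plane_matrix: "i \<noteq> j \<Longrightarrow> trace (plane_matrix i j a b c d 0) = a + d"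
proof -
  assume "i \<noteq> j"
  then have "trace (plane_matrix i j a b c d 0) = (\<Sum>k\<in>{i, j}. plane_matrix i j a b c d 0 $ k $ k)"
    unfolding trace_def by (intro sum.mono_neutral_right) (auto simp: plane_matrix_def)
  with \<open>i \<noteq> j\<close> show ?thesis by (simp add: plane_matrix_def)
qed

lemma det_plane_matrix_diagonal:
  fixes i j :: "'n::finite"
  assumes "i \<noteq> j"
  shows "det (plane_matrix i j a 0 0 d 1) = a * d"
proof -
  let ?D = "plane_matrix i j a 0 0 d 1"
  have "det ?D = (\<Prod>k\<in>UNIV. ?D $ k $ k)"
    using assms by (intro det_diagonal) (auto simp: plane_matrix_def)
  also have "\<dots> = (\<Prod>k\<in>{i, j}. ?D $ k $ k)"
    using assms by (intro prod.mono_neutral_right) (auto simp: plane_matrix_def)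
  finally show ?thesis using assms by (simp add: plane_matrix_def)
qed

lemma act_coset: "act A (coset g) = coset (A ** g)"
proof -
  have "act A (coset g) = {A ** (g ** h) | h. h \<in> SLZ}" unfolding act_def coset_def by blast
  then show ?thesis unfolding coset_def by (simp add: matrix_mul_assoc)
qed

lemma mat_1_in_SLZ: "mat 1 \<in> SLZ"
  unfolding SLZ_def SLR_def by (simp add: det_I) (simp add: mat_def)

lemma matrix_mul_in_SLZ: "A \<in> SLZ \<Longrightarrow> B \<in> SLZ \<Longrightarrow> A ** B \<in> SLZ"
  unfolding SLZ_def SLR_def
  by (simp add: det_mul) (simp add: matrix_matrix_mult_def Ints_sum)

lemma coset_mult_SLZ:
  assumes "A \<in> SLZ" "B \<in> SLZ" "A ** B = mat 1"
  shows "coset (g ** A) = coset g"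
proof
  show "coset (g ** A) \<subseteq> coset g"
  proof
    fix x assume "x \<in> coset (g ** A)"
    then obtain h where h: "h \<in> SLZ" "x = g ** (A ** h)" unfolding coset_def by (auto simp: matrix_mul_assoc)
    then show "x \<in> coset g" unfolding coset_def using matrix_mul_in_SLZ[OF assms(1) h(1)] by auto
  qed
  show "coset g \<subseteq> coset (g ** A)"
  proof
    fix x assume "x \<in> coset g"
    then obtain h where h: "h \<in> SLZ" "x = g ** h" unfolding coset_def by auto
    have "A ** (B ** h) = h" using assms(3) by (metis matrix_mul_assoc matrix_mul_lid)
    with h(2) have "x = (g ** A) ** (B ** h)" by (metis matrix_mul_assoc)
    then show "x \<in> coset (g ** A)" unfolding coset_def using matrix_mul_in_SLZ[OF assms(2) h(1)] by auto
  qed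
qed

lemma coset_eqD:
  assumes "coset g = coset h"
  shows "\<exists>\<gamma>\<in>SLZ. g = h ** \<gamma>"
proof -
  have "g \<in> coset g" unfolding coset_def using mat_1_in_SLZ by (metis (mono_tags) matrix_mul_rid mem_Collect_eq)
  then show ?thesis using assms unfolding coset_def by auto
qed

lemma eq_if_divide_Ints:
  fixes x y :: real
  assumes "x > 0" "y > 0" "x / y \<in> \<int>" "y / x \<in> \<int>"
  shows "x = y"
proof -
  have "x / y \<ge> 1" "y / x \<ge> 1"
    using assms Ints_nonzero_abs_ge1[of "x / y"] Ints_nonzero_abs_ge1[of "y / x"] by simp_all
  then show ?thesis using assms by (simp add: field_simps)
qed

lemma plane_matrix_diagonal_in_SLZ:
  fixes i j :: "'n::finite"
  assumes "i \<noteq> j" "a \<in> \<int>" "d \<in> \<int>" "a * d = 1"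
  shows "plane_matrix i j a 0 0 d 1 \<in> SLZ"
  unfolding SLZ_def SLR_def using assms
  by (simp add: det_plane_matrix_diagonal) (auto simp: plane_matrix_def)

lemma mexp_conj_rotation_generator:
  fixes i j :: "'n::finite"
  assumes "i \<noteq> j" "P ** Q = mat 1" "Q ** P = mat 1"
  shows "mexp (t *\<^sub>R (P ** plane_matrix i j 0 (-\<theta>) \<theta> 0 0 ** Q)) = P ** plane_rotation i j (t * \<theta>) ** Q"
proof -
  have "plane_matrix i j 0 (-(t * \<theta>)) (t * \<theta>) 0 0 = t *\<^sub>R plane_matrix i j 0 (-\<theta>) \<theta> 0 0"
    using assms(1) by (simp add: scaleR_plane_matrix)
  then have "t *\<^sub>R (P ** plane_matrix i j 0 (-\<theta>) \<theta> 0 0 ** Q) =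
      P ** plane_matrix i j 0 (-(t * \<theta>)) (t * \<theta>) 0 0 ** Q"
    by (simp add: matrix_mul_scaleR_right scalar_matrix_assoc[symmetric])
  then show ?thesis
    using mexp_conj[OF assms(2,3) exp_series_plane_rotation_generator[OF assms(1)]] by simp
qed

lemma plane_squeeze_inverse:
  "i \<noteq> j \<Longrightarrow> s \<noteq> 0 \<Longrightarrow> plane_squeeze i j s ** plane_squeeze i j (1 / s) = mat 1"
  by (simp add: plane_squeeze_def plane_matrix_mult mat_1_eq_plane_matrix)

lemma squeezed_plane_rotation:
  fixes i j :: "'n::finite"
  assumes "i \<noteq> j" "s \<noteq> 0"
  shows "plane_squeeze i j s ** plane_rotation i j \<theta> ** plane_squeeze i j (1 / s) =
     plane_matrix i j (cos \<theta>) (- (s^2 * sin \<theta>)) (sin \<theta> / s^2) (cos \<theta>) 1"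
  using assms by (simp add: plane_squeeze_def plane_rotation_def plane_matrix_mult power2_eq_square mult_ac)

lemma connecting_curve_squeezed_rotation:
  fixes g :: "real^'n::finite^'n"
  assumes "i \<noteq> j" "invertible g" "s \<noteq> 0"
  shows "connecting_curve (coset g) (coset g)
    (\<lambda>t. coset (g ** plane_squeeze i j s ** plane_rotation i j (t * pi) ** plane_squeeze i j (1 / s)))"
proof -
  obtain g' where g': "g ** g' = mat 1" "g' ** g = mat 1"
    using assms(2) unfolding invertible_def by auto
  define P where "P = g ** plane_squeeze i j s"
  define Q where "Q = plane_squeeze i j (1 / s) ** g'"
  have squeeze_inv: "plane_squeeze i j s ** plane_squeeze i j (1 / s) = mat 1"
    "plane_squeeze i j (1 / s) ** plane_squeeze i j s = mat 1"
    using plane_squeeze_inverse[OF assms(1), of s] plane_squeeze_inverse[OF assms(1), of "1 / s"] assms(3)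
    by simp_all
  have "P ** Q = g ** (plane_squeeze i j s ** plane_squeeze i j (1 / s)) ** g'"
    "Q ** P = plane_squeeze i j (1 / s) ** (g' ** g) ** plane_squeeze i j s"
    unfolding P_def Q_def by (simp_all add: matrix_mul_assoc)
  then have PQ: "P ** Q = mat 1" "Q ** P = mat 1"
    using g' squeeze_inv by simp_all
  define X where "X = P ** plane_matrix i j 0 (-pi) pi 0 0 ** Q"
  have "X \<in> slR"
    unfolding slR_def X_def using trace_conj[OF PQ(2)] trace_plane_matrix[OF assms(1)] by simp
  moreover have "act (mexp (t *\<^sub>R X)) (coset g) =
      coset (g ** plane_squeeze i j s ** plane_rotation i j (t * pi) ** plane_squeeze i j (1 / s))" for t
  proof -
    have "Q ** g = plane_squeeze i j (1 / s)"
      unfolding Q_def using g'(2) by (simp add: matrix_mul_assoc[symmetric])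
    moreover have "mexp (t *\<^sub>R X) = P ** plane_rotation i j (t * pi) ** Q"
      unfolding X_def by (rule mexp_conj_rotation_generator[OF assms(1) PQ])
    ultimately show ?thesis
      unfolding act_coset P_def by (metis matrix_mul_assoc)
  qed
  moreover have "coset (g ** plane_squeeze i j s ** plane_rotation i j (0 * pi) ** plane_squeeze i j (1 / s)) = coset g"
  proof -
    have "plane_squeeze i j s ** plane_rotation i j (0 * pi) ** plane_squeeze i j (1 / s) = mat 1"
      using assms(1) squeeze_inv by (simp add: plane_rotation_def mat_1_eq_plane_matrix[symmetric])
    then show ?thesis by (metis matrix_mul_assoc matrix_mul_rid)
  qed
  moreover have "coset (g ** plane_squeeze i j s ** plane_rotation i j (1 * pi) ** plane_squeeze i j (1 / s)) = coset g"
  proof -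
    let ?minus = "plane_matrix i j (-1) 0 0 (-1) 1"
    have "?minus \<in> SLZ" "?minus ** ?minus = mat 1"
      using assms(1) by (simp_all add: plane_matrix_diagonal_in_SLZ plane_matrix_mult mat_1_eq_plane_matrix)
    moreover have "plane_squeeze i j s ** plane_rotation i j (1 * pi) ** plane_squeeze i j (1 / s) = ?minus"
      using squeezed_plane_rotation[OF assms(1,3)] by simp
    ultimately show ?thesis by (metis coset_mult_SLZ matrix_mul_assoc)
  qed
  ultimately show ?thesis
    unfolding connecting_curve_def by auto
qed

lemma inj_on_coset_squeezed_quarter_turn:
  fixes g :: "real^'n::finite^'n"
  assumes "i \<noteq> j" "invertible g"
  shows "inj_on (\<lambda>s. coset (g ** plane_matrix i j 0 (- (s^2)) (1 / s^2) 0 1)) {0<..}"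
proof (rule inj_onI)
  fix s t :: real
  assume "s \<in> {0<..}" "t \<in> {0<..}"
    and eq: "coset (g ** plane_matrix i j 0 (- (s^2)) (1 / s^2) 0 1) = coset (g ** plane_matrix i j 0 (- (t^2)) (1 / t^2) 0 1)"
  then have pos: "s > 0" "t > 0" by simp_all
  obtain g' where g': "g' ** g = mat 1"
    using assms(2) unfolding invertible_def by auto
  obtain \<gamma> where "\<gamma> \<in> SLZ" and "g ** plane_matrix i j 0 (- (s^2)) (1 / s^2) 0 1 = g ** plane_matrix i j 0 (- (t^2)) (1 / t^2) 0 1 ** \<gamma>"
    using coset_eqD[OF eq] by blast
  then have "plane_matrix i j 0 (- (s^2)) (1 / s^2) 0 1 = plane_matrix i j 0 (- (t^2)) (1 / t^2) 0 1 ** \<gamma>"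
    by (metis g' matrix_mul_assoc matrix_mul_lid)
  then have "plane_matrix i j 0 (t^2) (- (1 / t^2)) 0 1 ** plane_matrix i j 0 (- (s^2)) (1 / s^2) 0 1 = \<gamma>"
    using pos assms(1) by (simp add: matrix_mul_assoc plane_matrix_mult mat_1_eq_plane_matrix[symmetric])
  then have "\<gamma> = plane_matrix i j (t^2 / s^2) 0 0 (s^2 / t^2) 1"
    using assms(1) by (simp add: plane_matrix_mult)
  then have "\<gamma> $ i $ i = t^2 / s^2" "\<gamma> $ j $ j = s^2 / t^2"
    using assms(1) by (simp_all add: plane_matrix_def)
  moreover have "\<forall>k l. \<gamma> $ k $ l \<in> \<int>"
    using \<open>\<gamma> \<in> SLZ\<close> by (simp add: SLZ_def)
  ultimately have "t^2 / s^2 \<in> \<int>" "s^2 / t^2 \<in> \<int>"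
    by metis+
  then have "t^2 = s^2"
    using pos by (intro eq_if_divide_Ints) auto
  then show "s = t" using pos by (simp add: power2_eq_iff_nonneg)
qed

lemma not_midpoint_blockable_coset_self:
  fixes g :: "real^'n::finite^'n"
  assumes "CARD('n) \<ge> 2" "invertible g"
  shows "\<not> midpoint_blockable (coset g) (coset g)"
proof
  assume "midpoint_blockable (coset g) (coset g)"
  then have fin: "finite {c (1/2) | c. connecting_curve (coset g) (coset g) c}"
    unfolding midpoint_blockable_def .
  have "\<not> (\<forall>a \<in> UNIV. \<forall>b \<in> UNIV. a = (b :: 'n))"
    using assms(1) card_le_Suc0_iff_eq[of "UNIV :: 'n set"] by simp
  then obtain i j :: 'n where "i \<noteq> j" by blast
  define mid where "mid s = coset (g ** plane_matrix i j 0 (- (s^2)) (1 / s^2) 0 1)" for s :: real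
  have "mid s \<in> {c (1/2) | c. connecting_curve (coset g) (coset g) c}" if "s > 0" for s
  proof -
    let ?c = "\<lambda>t. coset (g ** plane_squeeze i j s ** plane_rotation i j (t * pi) ** plane_squeeze i j (1 / s))"
    have "plane_squeeze i j s ** plane_rotation i j (1/2 * pi) ** plane_squeeze i j (1 / s) =
        plane_matrix i j 0 (- (s^2)) (1 / s^2) 0 1"
      using squeezed_plane_rotation[OF \<open>i \<noteq> j\<close>, of s] that by simp
    then have "mid s = coset (g ** (plane_squeeze i j s ** plane_rotation i j (1/2 * pi) ** plane_squeeze i j (1 / s)))"
      unfolding mid_def by simp
    also have "\<dots> = ?c (1/2)"
      by (simp only: matrix_mul_assoc)
    finally have "mid s = ?c (1/2)" .
    moreover have "connecting_curve (coset g) (coset g) ?c"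
      using that by (intro connecting_curve_squeezed_rotation[OF \<open>i \<noteq> j\<close> assms(2)]) simp
    ultimately have "mid s = ?c (1/2) \<and> connecting_curve (coset g) (coset g) ?c" ..
    then show ?thesis unfolding mem_Collect_eq by (rule exI[of _ ?c])
  qed
  then have "mid ` {0<..<1} \<subseteq> {c (1/2) | c. connecting_curve (coset g) (coset g) c}"
    by auto
  with fin have "finite (mid ` {0<..<1})"
    by (rule finite_subset[rotated])
  moreover have "inj_on mid {0<..<1}"
    using inj_on_coset_squeezed_quarter_turn[OF \<open>i \<noteq> j\<close> assms(2)]
    unfolding mid_def by (rule inj_on_subset) auto
  ultimately have "finite {0<..<(1::real)}"
    by (rule finite_imageD)
  then show False
    using infinite_Ioo[of "0::real" 1] by simp
qed

theorem proposition6p3: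
  assumes "CARD('n::finite) \<ge> 2"
  shows "(\<exists>m1 \<in> (Mspace :: (real^'n^'n) set set). \<exists>m2 \<in> Mspace. \<not> midpoint_blockable m1 m2)
       \<and> (\<forall>m \<in> (Mspace :: (real^'n^'n) set set). \<not> midpoint_blockable_away_from_itself m)"
proof -
  have none_blockable: "\<not> midpoint_blockable_away_from_itself m" if m: "m \<in> (Mspace :: (real^'n^'n) set set)" for m
  proof -
    obtain g :: "real^'n^'n" where "det g = 1" "m = coset g"
      using m unfolding Mspace_def SLR_def by blast
    then show ?thesis
      unfolding midpoint_blockable_away_from_itself_def
      using not_midpoint_blockable_coset_self[OF assms] invertible_det_nz[of g] by simp
  qed
  have "coset (mat 1) \<in> (Mspace :: (real^'n^'n) set set)"
    unfolding Mspace_def SLR_def by (rule imageI) simp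
  then show ?thesis
    using none_blockable unfolding midpoint_blockable_away_from_itself_def by blast
qed

end
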